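(* For every $\nu\in\mathcal{S}^1$, the function $(\ell,h)\mapsto\psi(\ell,h,\nu)$ on $(0,+\infty)\times(0,+\infty)$ is constant.
   Context: Lattice: $\hat e_1=(1,0)$, $\hat e_2=\tfrac12(1,\sqrt3)$, $\hat e_3=\tfrac12(-1,\sqrt3)$, $\mathcal{L}=\{z_1\hat e_1+z_2\hat e_2\colon z\in\mathbb{Z}^2\}$, $\mathcal{L}^1=\{z_1(\hat e_1+\hat e_2)+z_2(\hat e_2+\hat e_3)\colon z\in\mathbb{Z}^2\}$, $\mathcal{L}^2=\mathcal{L}^1+\hat e_1$, $\mathcal{L}^3=\mathcal{L}^1+\hat e_2$. $\mathcal{T}(\mathbb{R}^2)$: closed triangles $\mathrm{conv}\{i,j,k\}$, $i,j,k\in\mathcal L$ pairwise at distance 1, labelled $i\in\mathcal{L}^1,j\in\mathcal{L}^2,k\in\mathcal{L}^3$. For $\varepsilon>0$: $\mathcal{L}_\varepsilon=\varepsilon\mathcal{L}$, $\mathcal{T}_\varepsilon(\mathbb{R}^2)=\varepsilon\mathcal{T}(\mathbb{R}^2)$, $\mathcal{T}_\varepsilon(A)=\{T\in\mathcal{T}_\varepsilon(\mathbb{R}^2)\colon T\subset A\}$, $\mathcal{SF}_\varepsilon=\{u\colon\mathcal{L}_\varepsilon\to\mathcal{S}^1\}$. $F_\varepsilon(u,T)=\varepsilon|u(\varepsilon i)+u(\varepsilon j)+u(\varepsilon k)|^2$, $F_\varepsilon(u,A)=\sum_{T\in\mathcal{T}_\varepsilon(A)}F_\varepsilon(u,T)$.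 With $v\times w=v_1w_2-v_2w_1$, $\chi(u,T)=\frac{2}{3\sqrt3}\big(u(\varepsilon i)\times u(\varepsilon j)+u(\varepsilon j)\times u(\varepsilon k)+u(\varepsilon k)\times u(\varepsilon i)\big)$ and $\chi(u)$ equals $\chi(u,T)$ on the interior of each $T$. For $\nu\in\mathcal S^1$: $\nu^\perp=(-\nu_2,\nu_1)$, $R^\nu_{\ell,h}=\{x\colon|\langle x,\nu^\perp\rangle|<\ell/2,\ |\langle x,\nu\rangle|<h/2\}$, $\chi_\nu(x)=1$ if $\langle x,\nu\rangle\ge0$ and $-1$ otherwise, and $\psi(\ell,h,\nu)=\frac1\ell\inf\{\liminf_{\varepsilon\to0}F_\varepsilon(u_\varepsilon,R^\nu_{\ell,h})\colon \chi(u_\varepsilon)\to\chi_\nu\text{ in }L^1(R^\nu_{\ell,h})\}\in[0,+\infty]$, the infimum over all sequences $\varepsilon\to0$ and $u_\varepsilon\in\mathcal{SF}_\varepsilon$. *)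

theory Defs
  imports "HOL-Analysis.Analysis"
begin

type_synonym pt = "real \<times> real"

definition e1 :: pt where "e1 = (1, 0)"
definition e2 :: pt where "e2 = (1/2, sqrt 3 / 2)"
definition e3 :: pt where "e3 = (-1/2, sqrt 3 / 2)"

definition Lat :: "pt set" where
  "Lat = {of_int z1 *\<^sub>R e1 + of_int z2 *\<^sub>R e2 | z1 z2. True}"

definition Lat1 :: "pt set" where
  "Lat1 = {of_int z1 *\<^sub>R (e1 + e2) + of_int z2 *\<^sub>R (e2 + e3) | z1 z2. True}"

definition Lat2 :: "pt set" where "Lat2 = (\<lambda>x. x + e1) ` Lat1"
definition Lat3 :: "pt set" where "Lat3 = (\<lambda>x. x + e2) ` Lat1"

text \<open>Labelled unit triangles of the reference lattice: triples (i,j,k) with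
  i in Lat1, j in Lat2, k in Lat3, pairwise at distance 1. Each triangle
  conv{i,j,k} in T(R^2) corresponds to exactly one such triple.\<close>
definition tri :: "(pt \<times> pt \<times> pt) set" where
  "tri = {(i, j, k). i \<in> Lat1 \<and> j \<in> Lat2 \<and> k \<in> Lat3 \<and>
            dist i j = 1 \<and> dist j k = 1 \<and> dist k i = 1}"

definition triangle :: "real \<Rightarrow> pt \<times> pt \<times> pt \<Rightarrow> pt set" where
  "triangle eps t = (case t of (i, j, k) \<Rightarrow>
      convex hull {eps *\<^sub>R i, eps *\<^sub>R j, eps *\<^sub>R k})"

definition triA :: "real \<Rightarrow> pt set \<Rightarrow> (pt \<times> pt \<times> pt) set" where
  "triA eps A = {t \<in> tri. triangle eps t \<subseteq> A}"

text \<open>Spin fields u : eps L -> S^1 (values off eps L are irrelevant).\<close>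
definition spin_field :: "real \<Rightarrow> (pt \<Rightarrow> pt) \<Rightarrow> bool" where
  "spin_field eps u \<longleftrightarrow> (\<forall>x \<in> Lat. norm (u (eps *\<^sub>R x)) = 1)"

definition FT :: "real \<Rightarrow> (pt \<Rightarrow> pt) \<Rightarrow> pt \<times> pt \<times> pt \<Rightarrow> real" where
  "FT eps u t = (case t of (i, j, k) \<Rightarrow>
      eps * (norm (u (eps *\<^sub>R i) + u (eps *\<^sub>R j) + u (eps *\<^sub>R k)))\<^sup>2)"

definition FA :: "real \<Rightarrow> (pt \<Rightarrow> pt) \<Rightarrow> pt set \<Rightarrow> real" where
  "FA eps u A = (\<Sum>t \<in> triA eps A. FT eps u t)"

definition cross :: "pt \<Rightarrow> pt \<Rightarrow> real" where
  "cross v w = fst v * snd w - snd v * fst w"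

definition chiT :: "real \<Rightarrow> (pt \<Rightarrow> pt) \<Rightarrow> pt \<times> pt \<times> pt \<Rightarrow> real" where
  "chiT eps u t = (case t of (i, j, k) \<Rightarrow>
      2 / (3 * sqrt 3) * (cross (u (eps *\<^sub>R i)) (u (eps *\<^sub>R j))
                        + cross (u (eps *\<^sub>R j)) (u (eps *\<^sub>R k))
                        + cross (u (eps *\<^sub>R k)) (u (eps *\<^sub>R i))))"

text \<open>Piecewise constant chirality: equal to chiT on the interior of each
  triangle; set to 0 on the (null) union of triangle boundaries.\<close>
definition chi :: "real \<Rightarrow> (pt \<Rightarrow> pt) \<Rightarrow> pt \<Rightarrow> real" where
  "chi eps u x = (if \<exists>t \<in> tri. x \<in> interior (triangle eps t)
      then chiT eps u (SOME t. t \<in> tri \<and> x \<in> interior (triangle eps t))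
      else 0)"

definition perp :: "pt \<Rightarrow> pt" where "perp v = (- snd v, fst v)"

definition rect :: "pt \<Rightarrow> real \<Rightarrow> real \<Rightarrow> pt set" where
  "rect \<nu> l h = {x. \<bar>x \<bullet> perp \<nu>\<bar> < l / 2 \<and> \<bar>x \<bullet> \<nu>\<bar> < h / 2}"

definition chi_nu :: "pt \<Rightarrow> pt \<Rightarrow> real" where
  "chi_nu \<nu> x = (if x \<bullet> \<nu> \<ge> 0 then 1 else -1)"

definition psi :: "real \<Rightarrow> real \<Rightarrow> pt \<Rightarrow> ereal" where
  "psi l h \<nu> = ereal (1 / l) *
     Inf {liminf (\<lambda>n. ereal (FA (eps n) (u n) (rect \<nu> l h))) | eps u.
            (\<forall>n. eps n > 0) \<and> eps \<longlonglongrightarrow> 0 \<and> (\<forall>n. spin_field (eps n) (u n)) \<and>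
            (\<lambda>n. \<integral>\<^sup>+ x. ennreal (indicator (rect \<nu> l h) x * \<bar>chi (eps n) (u n) x - chi_nu \<nu> x\<bar>) \<partial>lborel)
              \<longlonglongrightarrow> 0}"

end

theory Submission
  imports Defs
begin

text \<open>It suffices to show \<open>l \<cdot> psi l h \<nu> \<le> (l + 2\<eta>) \<cdot> psi l' h' \<nu>\<close> for every \<open>\<eta> > 0\<close>.
  Dilating a competitor \<open>(eps, u)\<close> for \<open>R(l', h')\<close> by a factor \<open>c\<close>, i.e. passing to
  \<open>(c eps, u(\<cdot>/c))\<close>, gives a competitor for \<open>R(c l', c h')\<close> with \<open>c\<close> times the energy;
  choose \<open>c\<close> with \<open>c l' = n (l + 2\<eta>)\<close> and \<open>c h' \<ge> h + 2\<eta>\<close>. This rectangle contains \<open>n\<close>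
  disjoint columns, translates of \<open>R(l + 2\<eta>, h + 2\<eta>)\<close>, so for each \<open>eps\<close> one of them carries
  at most \<open>1/n\<close> of the energy. Translating the spin field by a vector of \<open>eps Lat1\<close>, which maps
  the labelled triangulation to itself, moves \<open>R(l, h)\<close> into that column. That vector lies
  within \<open>4 eps\<close> of the centre of the column, hence almost parallel to the interface, so the
  chirality still converges to \<open>chi_nu\<close> on \<open>R(l, h)\<close>. Thus
  \<open>l \<cdot> psi l h \<nu> \<le> n\<inverse> c l' \<cdot> psi l' h' \<nu> = (l + 2\<eta>) \<cdot> psi l' h' \<nu>\<close>.\<close>

lemma mem_scaleR_image_iff:
  fixes S :: "'a::real_vector set"
  assumes "c \<noteq> 0"
  shows "x \<in> (\<lambda>y. c *\<^sub>R y) ` S \<longleftrightarrow> (1 / c) *\<^sub>R x \<in> S"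
proof
  assume "(1 / c) *\<^sub>R x \<in> S"
  moreover have "x = c *\<^sub>R ((1 / c) *\<^sub>R x)" using assms by simp
  ultimately show "x \<in> (\<lambda>y. c *\<^sub>R y) ` S" by blast
qed (use assms in auto)

lemma interior_convex_hull_subset_slab:
  fixes w :: "'a::euclidean_space"
  assumes "w \<noteq> 0" "\<And>y. y \<in> S \<Longrightarrow> \<bar>w \<bullet> y - c\<bar> \<le> r"
  shows "interior (convex hull S) \<subseteq> {x. \<bar>w \<bullet> x - c\<bar> < r}"
proof -
  have "S \<subseteq> {x. w \<bullet> x \<le> c + r} \<inter> {x. c - r \<le> w \<bullet> x}"
    using assms(2) by (force simp: abs_le_iff)
  then have "convex hull S \<subseteq> {x. w \<bullet> x \<le> c + r} \<inter> {x. c - r \<le> w \<bullet> x}"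
    by (intro hull_minimal) (simp_all add: convex_Int convex_halfspace_le convex_halfspace_ge)
  then have "interior (convex hull S) \<subseteq> interior ({x. w \<bullet> x \<le> c + r} \<inter> {x. c - r \<le> w \<bullet> x})"
    by (rule interior_mono)
  also have "\<dots> = {x. w \<bullet> x < c + r} \<inter> {x. c - r < w \<bullet> x}"
    using assms(1) by (simp add: interior_Int)
  finally show ?thesis by (auto simp: abs_less_iff)
qed

lemma nn_integral_lborel_scale:
  fixes f :: "'a::euclidean_space \<Rightarrow> ennreal"
  assumes [measurable]: "f \<in> borel_measurable borel" and "c > 0"
  shows "(\<integral>\<^sup>+ x. f ((1 / c) *\<^sub>R x) \<partial>lborel) = ennreal (c ^ DIM('a)) * (\<integral>\<^sup>+ x. f x \<partial>lborel)"
proof -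
  have "(\<integral>\<^sup>+ x. f ((1 / c) *\<^sub>R x) \<partial>lborel)
      = (\<integral>\<^sup>+ x. f ((1 / c) *\<^sub>R x) \<partial>density (distr lborel borel (\<lambda>x. 0 + c *\<^sub>R x)) (\<lambda>_. \<bar>c\<bar> ^ DIM('a)))"
    using lborel_affine[of c "0 :: 'a"] assms(2) by simp
  also have "\<dots> = (\<integral>\<^sup>+ x. ennreal (c ^ DIM('a)) * f x \<partial>lborel)"
    using assms(2) by (simp add: nn_integral_density nn_integral_distr)
  also have "\<dots> = ennreal (c ^ DIM('a)) * (\<integral>\<^sup>+ x. f x \<partial>lborel)"
    by (rule nn_integral_cmult) simp
  finally show ?thesis .
qed

lemma nn_integral_lborel_translate:
  fixes f :: "'a::euclidean_space \<Rightarrow> ennreal"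
  assumes [measurable]: "f \<in> borel_measurable borel"
  shows "(\<integral>\<^sup>+ x. f (x + a) \<partial>lborel) = (\<integral>\<^sup>+ x. f x \<partial>lborel)"
  by (subst lborel_distr_plus[of a, symmetric]) (simp add: nn_integral_distr add.commute)

lemma hyperplane_null_set:
  fixes \<nu> :: "'a::euclidean_space"
  assumes "\<nu> \<noteq> 0"
  shows "{x. \<nu> \<bullet> x = 0} \<in> null_sets lborel"
proof -
  have "{x. \<nu> \<bullet> x = 0} \<in> null_sets lebesgue"
    using negligible_hyperplane[of \<nu> 0] assms by (simp add: negligible_iff_null_sets)
  moreover have "{x. \<nu> \<bullet> x = 0} \<in> sets lborel"
    by simp
  ultimately show ?thesis
    using null_sets_completion_iff by blast
qed

lemma emeasure_thin_slabs_tendsto_0: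
  fixes \<nu> :: "'a::euclidean_space"
  assumes "\<nu> \<noteq> 0" "bounded A" "A \<in> sets borel"
  shows "(\<lambda>n. emeasure lborel (A \<inter> {x. \<bar>x \<bullet> \<nu>\<bar> \<le> 1 / Suc n})) \<longlonglongrightarrow> 0"
proof -
  define T where "T n = A \<inter> {x. \<bar>x \<bullet> \<nu>\<bar> \<le> 1 / Suc n}" for n
  have "range T \<subseteq> sets lborel"
    using assms(3) by (auto simp: T_def)
  moreover have "decseq T"
  proof (rule decseq_SucI)
    fix n
    have "1 / real (Suc (Suc n)) \<le> 1 / real (Suc n)"
      by (simp add: frac_le)
    then show "T (Suc n) \<subseteq> T n"
      unfolding T_def by fastforce
  qed
  moreover have "emeasure lborel (T n) \<noteq> \<infinity>" for n
    using emeasure_bounded_finite[of "T n"] bounded_subset[OF assms(2)] by (auto simp: T_def)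
  ultimately have "(\<lambda>n. emeasure lborel (T n)) \<longlonglongrightarrow> emeasure lborel (\<Inter>n. T n)"
    by (rule Lim_emeasure_decseq)
  moreover have "(\<Inter>n. T n) \<subseteq> {x. \<nu> \<bullet> x = 0}"
  proof
    fix x assume x: "x \<in> (\<Inter>n. T n)"
    have "\<bar>x \<bullet> \<nu>\<bar> \<le> 0"
    proof (rule field_le_epsilon)
      fix e :: real assume "e > 0"
      then obtain n where "1 / real (Suc n) < e"
        using nat_approx_posE by blast
      moreover have "x \<in> T n"
        using x by blast
      ultimately show "\<bar>x \<bullet> \<nu>\<bar> \<le> 0 + e"
        unfolding T_def by simp
    qed
    then show "x \<in> {x. \<nu> \<bullet> x = 0}"
      by (simp add: inner_commute)
  qed
  moreover have "(\<Inter>n. T n) \<in> sets lborel"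
    using assms(3) unfolding T_def by measurable
  ultimately show ?thesis
    using null_sets_subset[OF hyperplane_null_set[OF assms(1)]] by (simp add: T_def null_setsD1)
qed

lemma emeasure_slab_tendsto_0:
  fixes \<nu> :: "'a::euclidean_space"
  assumes "\<nu> \<noteq> 0" "bounded A" "A \<in> sets borel" "r \<longlonglongrightarrow> 0"
  shows "(\<lambda>m. emeasure lborel (A \<inter> {x. \<bar>x \<bullet> \<nu>\<bar> \<le> \<bar>r m\<bar>})) \<longlonglongrightarrow> 0"
  unfolding order_tendsto_iff
proof (intro conjI allI impI)
  fix a :: ennreal assume "0 < a"
  then obtain n where n: "emeasure lborel (A \<inter> {x. \<bar>x \<bullet> \<nu>\<bar> \<le> 1 / Suc n}) < a"
    using order_tendstoD(2)[OF emeasure_thin_slabs_tendsto_0[OF assms(1-3)]]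
    by (auto simp: eventually_sequentially)
  have "\<forall>\<^sub>F m in sequentially. \<bar>r m\<bar> < 1 / Suc n"
    using order_tendstoD(2)[OF tendsto_rabs_zero[OF assms(4)]] by simp
  then show "\<forall>\<^sub>F m in sequentially. emeasure lborel (A \<inter> {x. \<bar>x \<bullet> \<nu>\<bar> \<le> \<bar>r m\<bar>}) < a"
  proof (rule eventually_mono)
    fix m assume "\<bar>r m\<bar> < 1 / Suc n"
    then have "A \<inter> {x. \<bar>x \<bullet> \<nu>\<bar> \<le> \<bar>r m\<bar>} \<subseteq> A \<inter> {x. \<bar>x \<bullet> \<nu>\<bar> \<le> 1 / Suc n}"
      by auto
    moreover have "A \<inter> {x. \<bar>x \<bullet> \<nu>\<bar> \<le> 1 / Suc n} \<in> sets lborel"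
      using assms(3) by measurable
    ultimately show "emeasure lborel (A \<inter> {x. \<bar>x \<bullet> \<nu>\<bar> \<le> \<bar>r m\<bar>}) < a"
      using emeasure_mono n by (blast intro: order.strict_trans1)
  qed
qed simp

lemma ereal_le_mult_Inf:
  assumes "K > 0" "\<And>s. s \<in> S \<Longrightarrow> x \<le> ereal K * s"
  shows "x \<le> ereal K * Inf S"
proof -
  have "ereal (1 / K) * x \<le> Inf S"
  proof (rule Inf_greatest)
    fix s assume "s \<in> S"
    have "ereal (1 / K) * x \<le> ereal (1 / K) * (ereal K * s)"
      using assms(1) by (intro ereal_mult_left_mono assms(2) \<open>s \<in> S\<close>) simp
    also have "\<dots> = s"
      using assms(1) by (simp add: mult.assoc[symmetric])
    finally show "ereal (1 / K) * x \<le> s" .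
  qed
  then have "ereal K * (ereal (1 / K) * x) \<le> ereal K * Inf S"
    using assms(1) by (intro ereal_mult_left_mono) simp_all
  with assms(1) show ?thesis
    by (simp add: mult.assoc[symmetric])
qed

lemma ereal_le_if_le_mult_gt_1:
  fixes x y :: ereal
  assumes "0 \<le> y" "\<And>t. 1 < t \<Longrightarrow> x \<le> ereal t * y"
  shows "x \<le> y"
proof (cases y)
  case (real r)
  show ?thesis
  proof (rule ereal_le_epsilon2)
    fix e :: real assume "0 < e"
    have "r \<ge> 0"
      using assms(1) real by simp
    then have "x \<le> ereal (1 + e / (r + 1)) * y"
      using \<open>0 < e\<close> by (intro assms(2)) simp
    also have "(1 + e / (r + 1)) * r \<le> r + e"
      using \<open>0 < e\<close> \<open>r \<ge> 0\<close> by (simp add: field_simps)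
    then have "ereal (1 + e / (r + 1)) * y \<le> y + ereal e"
      by (simp add: real)
    finally show "x \<le> y + ereal e" .
  qed
qed (use assms in auto)

section \<open>Oblique coordinates on the triangular lattice\<close>

definition coord1 :: "pt \<Rightarrow> real" where "coord1 p = fst p - snd p / sqrt 3"

definition coord2 :: "pt \<Rightarrow> real" where "coord2 p = 2 * snd p / sqrt 3"

lemma coord1_linear [simp]:
  "coord1 0 = 0" "coord1 (p + q) = coord1 p + coord1 q" "coord1 (p - q) = coord1 p - coord1 q"
  "coord1 (c *\<^sub>R p) = c * coord1 p"
  by (auto simp: coord1_def field_simps)

lemma coord2_linear [simp]:
  "coord2 0 = 0" "coord2 (p + q) = coord2 p + coord2 q" "coord2 (p - q) = coord2 p - coord2 q"
  "coord2 (c *\<^sub>R p) = c * coord2 p"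
  by (auto simp: coord2_def field_simps)

lemma coord_basis [simp]:
  "coord1 e1 = 1" "coord2 e1 = 0" "coord1 e2 = 0" "coord2 e2 = 1" "coord1 e3 = -1" "coord2 e3 = 1"
  by (auto simp: coord1_def coord2_def e1_def e2_def e3_def field_simps)

lemma coord_expansion: "p = coord1 p *\<^sub>R e1 + coord2 p *\<^sub>R e2"
  by (cases p) (auto simp: coord1_def coord2_def e1_def e2_def field_simps)

lemma coord_eqI: "coord1 p = coord1 q \<Longrightarrow> coord2 p = coord2 q \<Longrightarrow> p = q"
  by (metis coord_expansion)

lemma coord_inner:
  "coord1 p = (1, - 1 / sqrt 3) \<bullet> p"
  "coord2 p = (0, 2 / sqrt 3) \<bullet> p"
  by (cases p; simp add: coord1_def coord2_def)+

lemma coord_sum_inner: "coord1 p + coord2 p = (1, 1 / sqrt 3) \<bullet> p"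
  by (cases p) (simp add: coord1_def coord2_def field_simps)

lemma dist_sq_coord:
  "(dist p q)\<^sup>2 = (coord1 (p - q))\<^sup>2 + coord1 (p - q) * coord2 (p - q) + (coord2 (p - q))\<^sup>2"
proof -
  obtain a b where "p - q = (a, b)" by (cases "p - q")
  moreover have "(dist p q)\<^sup>2 = (p - q) \<bullet> (p - q)"
    by (simp add: dist_norm power2_norm_eq_inner)
  ultimately show ?thesis
    by (simp add: coord1_def coord2_def power2_eq_square field_simps)
qed

lemma Lat_iff_coords: "p \<in> Lat \<longleftrightarrow> coord1 p \<in> \<int> \<and> coord2 p \<in> \<int>"
proof
  assume "p \<in> Lat"
  then show "coord1 p \<in> \<int> \<and> coord2 p \<in> \<int>" by (auto simp: Lat_def)
next
  assume "coord1 p \<in> \<int> \<and> coord2 p \<in> \<int>"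
  then obtain a b where "coord1 p = of_int a" "coord2 p = of_int b"
    by (auto elim!: Ints_cases)
  then have "p = of_int a *\<^sub>R e1 + of_int b *\<^sub>R e2"
    using coord_expansion[of p] by simp
  then show "p \<in> Lat"
    unfolding Lat_def by blast
qed

lemma Lat_add: "p \<in> Lat \<Longrightarrow> q \<in> Lat \<Longrightarrow> p + q \<in> Lat"
  by (simp add: Lat_iff_coords)

lemma Lat1_coords:
  assumes "p \<in> Lat1"
  obtains z1 z2 :: int where "coord1 p = z1 - z2" "coord2 p = z1 + 2 * z2"
  using assms by (auto simp: Lat1_def)

lemma Lat1_subset_Lat: "Lat1 \<subseteq> Lat"
  by (auto simp: Lat_iff_coords elim!: Lat1_coords)

lemma Lat_cosets_subset_Lat: "Lat2 \<subseteq> Lat" "Lat3 \<subseteq> Lat"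
  using Lat1_subset_Lat by (auto simp: Lat2_def Lat3_def Lat_iff_coords)

lemma Lat1_add_diff:
  assumes "p \<in> Lat1" "q \<in> Lat1"
  shows "p + q \<in> Lat1" "p - q \<in> Lat1"
proof -
  obtain a b c d :: int where
    "p = of_int a *\<^sub>R (e1 + e2) + of_int b *\<^sub>R (e2 + e3)"
    "q = of_int c *\<^sub>R (e1 + e2) + of_int d *\<^sub>R (e2 + e3)"
    using assms by (auto simp: Lat1_def)
  then have "p + q = of_int (a + c) *\<^sub>R (e1 + e2) + of_int (b + d) *\<^sub>R (e2 + e3)"
    "p - q = of_int (a - c) *\<^sub>R (e1 + e2) + of_int (b - d) *\<^sub>R (e2 + e3)"
    by (simp_all add: algebra_simps)
  then show "p + q \<in> Lat1" "p - q \<in> Lat1"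
    unfolding Lat1_def by blast+
qed

lemma Lat1_uminus: "s \<in> Lat1 \<Longrightarrow> - s \<in> Lat1"
  using Lat1_add_diff(2)[of s s] Lat1_add_diff(2)[of "s - s" s] by simp

lemma abs_coord_le:
  "\<bar>coord1 p\<bar> \<le> 2 * norm p" "\<bar>coord2 p\<bar> \<le> 2 * norm p"
proof -
  have fst_snd: "\<bar>fst p\<bar> \<le> norm p" "\<bar>snd p\<bar> \<le> norm p"
    using norm_fst_le[of "fst p" "snd p"] norm_snd_le[of "snd p" "fst p"] by simp_all
  have "\<bar>snd p\<bar> / sqrt 3 \<le> \<bar>snd p\<bar>"
    by (simp add: field_simps mult_le_cancel_left1)
  moreover have "\<bar>fst p - snd p / sqrt 3\<bar> \<le> \<bar>fst p\<bar> + \<bar>snd p\<bar> / sqrt 3"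
    using abs_triangle_ineq4[of "fst p" "snd p / sqrt 3"] by (simp add: abs_divide)
  ultimately show "\<bar>coord1 p\<bar> \<le> 2 * norm p" "\<bar>coord2 p\<bar> \<le> 2 * norm p"
    using fst_snd by (simp_all add: coord1_def coord2_def abs_divide abs_mult)
qed

lemma finite_Lat_cball: "finite (Lat \<inter> cball 0 R)"
proof -
  let ?Z = "{k \<in> \<int>. \<bar>k\<bar> \<le> 2 * R}"
  have "Lat \<inter> cball 0 R \<subseteq> (\<lambda>(a, b). a *\<^sub>R e1 + b *\<^sub>R e2) ` (?Z \<times> ?Z)"
  proof
    fix p assume p: "p \<in> Lat \<inter> cball 0 R"
    then have "(coord1 p, coord2 p) \<in> ?Z \<times> ?Z"
      using abs_coord_le[of p] by (auto simp: Lat_iff_coords)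
    then show "p \<in> (\<lambda>(a, b). a *\<^sub>R e1 + b *\<^sub>R e2) ` (?Z \<times> ?Z)"
      using coord_expansion[of p] by (auto intro!: image_eqI[where x = "(coord1 p, coord2 p)"])
  qed
  then show ?thesis
    by (rule finite_subset) (simp add: finite_abs_int_segment)
qed

lemma exists_Lat1_within_4: "\<exists>s \<in> Lat1. norm (s - y) \<le> 4"
proof -
  define s1 where "s1 = (2 * coord1 y + coord2 y) / 3"
  define s2 where "s2 = (coord2 y - coord1 y) / 3"
  define s where "s = of_int \<lfloor>s1\<rfloor> *\<^sub>R (e1 + e2) + of_int \<lfloor>s2\<rfloor> *\<^sub>R (e2 + e3)"
  have "s \<in> Lat1"
    unfolding s_def Lat1_def by blast
  have "y = s1 *\<^sub>R (e1 + e2) + s2 *\<^sub>R (e2 + e3)"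
    by (rule coord_eqI) (simp_all add: s1_def s2_def field_simps)
  then have "s - y = (of_int \<lfloor>s1\<rfloor> - s1) *\<^sub>R (e1 + e2) + (of_int \<lfloor>s2\<rfloor> - s2) *\<^sub>R (e2 + e3)"
    by (simp add: s_def algebra_simps)
  then have "norm (s - y) \<le> \<bar>of_int \<lfloor>s1\<rfloor> - s1\<bar> * norm (e1 + e2) + \<bar>of_int \<lfloor>s2\<rfloor> - s2\<bar> * norm (e2 + e3)"
    by (metis norm_scaleR norm_triangle_ineq real_norm_def)
  also have "\<dots> \<le> 1 * 2 + 1 * 2"
  proof -
    have "\<bar>of_int \<lfloor>r\<rfloor> - r\<bar> \<le> 1" for r :: real
      unfolding abs_le_iff using floor_correct[of r] by linarith
    moreover have "norm (e1 + e2) \<le> 2" "norm (e2 + e3) \<le> 2"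
      by (simp_all add: e1_def e2_def e3_def norm_Pair power_divide real_sqrt_le_iff')
    ultimately show ?thesis
      by (intro add_mono mult_mono) simp_all
  qed
  finally show ?thesis
    using \<open>s \<in> Lat1\<close> by auto
qed

lemma exists_scaled_Lat1_within_4:
  assumes "eps > 0"
  shows "\<exists>S \<in> Lat1. norm (eps *\<^sub>R S - y) \<le> 4 * eps"
proof -
  obtain S where "S \<in> Lat1" and S: "norm (S - (1 / eps) *\<^sub>R y) \<le> 4"
    using exists_Lat1_within_4 by blast
  have "eps *\<^sub>R S - y = eps *\<^sub>R (S - (1 / eps) *\<^sub>R y)"
    using assms by (simp add: algebra_simps)
  then have "norm (eps *\<^sub>R S - y) \<le> 4 * eps"
    using mult_left_mono[OF S, of eps] assms by (simp add: mult.commute)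
  with \<open>S \<in> Lat1\<close> show ?thesis
    by blast
qed

text \<open>The norm whose closed unit ball is the hexagon with vertices
  \<open>\<plusminus>e1\<close>, \<open>\<plusminus>e2\<close>, \<open>\<plusminus>e3\<close>.\<close>
definition hex_norm :: "pt \<Rightarrow> real" where
  "hex_norm p = max (max \<bar>coord1 p\<bar> \<bar>coord2 p\<bar>) \<bar>coord1 p + coord2 p\<bar>"

lemma hex_norm_less_iff:
  "hex_norm p < r \<longleftrightarrow> \<bar>coord1 p\<bar> < r \<and> \<bar>coord2 p\<bar> < r \<and> \<bar>coord1 p + coord2 p\<bar> < r"
  by (auto simp: hex_norm_def)

lemma hex_norm_le_iff:
  "hex_norm p \<le> r \<longleftrightarrow> \<bar>coord1 p\<bar> \<le> r \<and> \<bar>coord2 p\<bar> \<le> r \<and> \<bar>coord1 p + coord2 p\<bar> \<le> r"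
  by (auto simp: hex_norm_def)

lemma hex_norm_scaleR: "hex_norm (c *\<^sub>R p) = \<bar>c\<bar> * hex_norm p"
  by (simp add: hex_norm_def abs_mult max_mult_distrib_left flip: distrib_left)

lemma hex_norm_minus_commute: "hex_norm (p - q) = hex_norm (q - p)"
  using hex_norm_scaleR[of "-1" "p - q"] by simp

lemma hex_norm_triangle: "hex_norm (p + q) \<le> hex_norm p + hex_norm q"
proof -
  have "\<bar>coord1 x\<bar> \<le> hex_norm x" "\<bar>coord2 x\<bar> \<le> hex_norm x" "\<bar>coord1 x + coord2 x\<bar> \<le> hex_norm x" for x
    by (simp_all add: hex_norm_def)
  from this[of p] this[of q] show ?thesis
    unfolding hex_norm_le_iff coord1_linear coord2_linear by linarith
qed

lemma int_abs_le_1_if_square_le_2: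
  fixes x :: int
  assumes "x\<^sup>2 \<le> 2"
  shows "\<bar>x\<bar> \<le> 1"
proof (rule ccontr)
  assume "\<not> \<bar>x\<bar> \<le> 1"
  then have "2\<^sup>2 \<le> \<bar>x\<bar>\<^sup>2" by (intro power_mono) auto
  with assms show False by simp
qed

lemma hex_norm_le_1_if_dist_1:
  assumes "p \<in> Lat" "q \<in> Lat" "dist p q = 1"
  shows "hex_norm (p - q) \<le> 1"
proof -
  have "coord1 (p - q) \<in> \<int>" "coord2 (p - q) \<in> \<int>"
    using assms(1,2) by (simp_all add: Lat_iff_coords Ints_diff)
  then obtain a b :: int where ab: "coord1 (p - q) = a" "coord2 (p - q) = b"
    by (auto elim!: Ints_cases)
  have "real_of_int (a\<^sup>2 + a * b + b\<^sup>2) = 1"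
    using dist_sq_coord[of p q] assms(3) ab by simp
  then have "a\<^sup>2 + a * b + b\<^sup>2 = 1" by linarith
  then have "a\<^sup>2 + b\<^sup>2 + (a + b)\<^sup>2 = 2"
    by (simp add: power2_eq_square algebra_simps)
  then have "a\<^sup>2 \<le> 2" "b\<^sup>2 \<le> 2" "(a + b)\<^sup>2 \<le> 2"
    using zero_le_power2[of a] zero_le_power2[of b] zero_le_power2[of "a + b"] by linarith+
  then have "\<bar>a\<bar> \<le> 1" "\<bar>b\<bar> \<le> 1" "\<bar>a + b\<bar> \<le> 1"
    by (simp_all add: int_abs_le_1_if_square_le_2)
  then show ?thesis using ab by (simp add: hex_norm_le_iff flip: of_int_add of_int_abs)
qed

lemma Lat1_hex_norm_ge_2:
  assumes "p \<in> Lat1" "p \<noteq> 0"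
  shows "2 \<le> hex_norm p"
proof (rule ccontr)
  assume "\<not> 2 \<le> hex_norm p"
  moreover obtain z1 z2 :: int where z: "coord1 p = z1 - z2" "coord2 p = z1 + 2 * z2"
    using assms(1) by (rule Lat1_coords)
  ultimately have "\<bar>z1 - z2\<bar> < 2" "\<bar>z1 + 2 * z2\<bar> < 2" "\<bar>2 * z1 + z2\<bar> < 2"
    unfolding hex_norm_less_iff not_le by linarith+
  then have "z1 = 0" "z2 = 0" by presburger+
  then show False
    using assms(2) z coord_expansion[of p] by simp
qed

section \<open>Labelled triangles and the chirality field\<close>

lemma interior_convex_hull_subset_hex_ball:
  assumes "\<And>y. y \<in> S \<Longrightarrow> hex_norm (y - c) \<le> r"
  shows "interior (convex hull S) \<subseteq> {x. hex_norm (x - c) < r}"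
proof -
  have slab: "interior (convex hull S) \<subseteq> {x. \<bar>w \<bullet> (x - c)\<bar> < r}"
    if "w \<noteq> 0" "\<And>y. y \<in> S \<Longrightarrow> \<bar>w \<bullet> (y - c)\<bar> \<le> r" for w :: pt
    using interior_convex_hull_subset_slab[of w S "w \<bullet> c" r] that by (simp add: inner_diff_right)
  have "interior (convex hull S) \<subseteq> {x. \<bar>coord1 (x - c)\<bar> < r}"
    using slab[of "(1, - 1 / sqrt 3)"] assms by (simp add: coord_inner hex_norm_le_iff zero_prod_def)
  moreover have "interior (convex hull S) \<subseteq> {x. \<bar>coord2 (x - c)\<bar> < r}"
    using slab[of "(0, 2 / sqrt 3)"] assms by (simp add: coord_inner hex_norm_le_iff zero_prod_def)
  moreover have "interior (convex hull S) \<subseteq> {x. \<bar>coord1 (x - c) + coord2 (x - c)\<bar> < r}"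
    using slab[of "(1, 1 / sqrt 3)"] assms by (simp only: coord_sum_inner hex_norm_le_iff) (simp add: zero_prod_def)
  ultimately show ?thesis
    by (auto simp: hex_norm_less_iff)
qed

lemma tri_vertices:
  assumes "(i, j, k) \<in> tri"
  shows "i \<in> Lat1" "j \<in> Lat2" "k \<in> Lat3" "dist i j = 1" "dist j k = 1" "dist k i = 1"
  using assms by (simp_all add: tri_def)

lemma tri_vertices_in_Lat:
  assumes "(i, j, k) \<in> tri"
  shows "i \<in> Lat" "j \<in> Lat" "k \<in> Lat"
  using tri_vertices[OF assms] Lat1_subset_Lat Lat_cosets_subset_Lat by blast+

lemma tri_vertex_hex_norm_le_1:
  assumes "(i, j, k) \<in> tri" "v \<in> {i, j, k}" "v' \<in> {i, j, k}"
  shows "hex_norm (v' - v) \<le> 1"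
proof (cases "v = v'")
  case True
  then show ?thesis by (simp add: hex_norm_def)
next
  case False
  with assms have "dist v' v = 1"
    using tri_vertices[OF assms(1)] by (auto simp: dist_commute)
  then show ?thesis
    using tri_vertices_in_Lat[OF assms(1)] assms(2,3) hex_norm_le_1_if_dist_1 by blast
qed

lemma triangle_interior_hex_near_vertex:
  assumes "(i, j, k) \<in> tri" "eps > 0" "x \<in> interior (triangle eps (i, j, k))" "v \<in> {i, j, k}"
  shows "hex_norm (x - eps *\<^sub>R v) < eps"
proof -
  have "interior (convex hull {eps *\<^sub>R i, eps *\<^sub>R j, eps *\<^sub>R k}) \<subseteq> {x. hex_norm (x - eps *\<^sub>R v) < eps}"
  proof (rule interior_convex_hull_subset_hex_ball)
    fix y assume "y \<in> {eps *\<^sub>R i, eps *\<^sub>R j, eps *\<^sub>R k}"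
    then obtain v' where v': "v' \<in> {i, j, k}" "y = eps *\<^sub>R v'"
      by blast
    then have "y - eps *\<^sub>R v = eps *\<^sub>R (v' - v)"
      by (simp add: scaleR_right_diff_distrib)
    then have "hex_norm (y - eps *\<^sub>R v) = eps * hex_norm (v' - v)"
      using assms(2) by (simp add: hex_norm_scaleR)
    also have "\<dots> \<le> eps"
      using tri_vertex_hex_norm_le_1[OF assms(1,4) v'(1)] assms(2) by simp
    finally show "hex_norm (y - eps *\<^sub>R v) \<le> eps" .
  qed
  with assms(3) show ?thesis
    unfolding triangle_def by auto
qed

lemma tri_label_differences_in_Lat1:
  assumes "(i, j, k) \<in> tri" "(i', j', k') \<in> tri"
  shows "i - i' \<in> Lat1" "j - j' \<in> Lat1" "k - k' \<in> Lat1"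
  using tri_vertices[OF assms(1)] tri_vertices[OF assms(2)] Lat1_add_diff(2)
  by (auto simp: Lat2_def Lat3_def)

lemma eq_if_Lat1_diff_hex_norm_less_2:
  assumes "p - q \<in> Lat1" "hex_norm (p - q) < 2"
  shows "p = q"
  using Lat1_hex_norm_ge_2[OF assms(1)] assms(2) by force

text \<open>Distinct labelled triangles have disjoint interiors: two vertices with the same label
  lie in the same coset of \<open>Lat1\<close>, but are too close in \<open>hex_norm\<close> to be different.\<close>
lemma tri_interior_unique:
  assumes "eps > 0" "t \<in> tri" "s \<in> tri"
    "x \<in> interior (triangle eps t)" "x \<in> interior (triangle eps s)"
  shows "t = s"
proof -
  obtain i j k i' j' k' where ts: "t = (i, j, k)" "s = (i', j', k')"
    by (cases t, cases s) auto
  have "hex_norm (v - v') < 2" if "v \<in> {i, j, k}" "v' \<in> {i', j', k'}" for v v'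
  proof -
    have "hex_norm (x - eps *\<^sub>R v) < eps" "hex_norm (x - eps *\<^sub>R v') < eps"
      using triangle_interior_hex_near_vertex assms that ts by blast+
    then have "hex_norm (eps *\<^sub>R (v - v')) < 2 * eps"
      using hex_norm_triangle[of "eps *\<^sub>R v - x" "x - eps *\<^sub>R v'"] hex_norm_minus_commute[of x]
      by (simp add: algebra_simps)
    then show ?thesis
      using assms(1) by (simp add: hex_norm_scaleR)
  qed
  then show ?thesis
    using tri_label_differences_in_Lat1[of i j k i' j' k'] eq_if_Lat1_diff_hex_norm_less_2 assms(2,3) ts
    by simp
qed

lemma chi_eq_chiT:
  assumes "eps > 0" "t \<in> tri" "x \<in> interior (triangle eps t)"
  shows "chi eps u x = chiT eps u t"
proof -
  have "(SOME s. s \<in> tri \<and> x \<in> interior (triangle eps s)) = t"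
  proof (rule some_equality)
    fix s assume "s \<in> tri \<and> x \<in> interior (triangle eps s)"
    then show "s = t" using tri_interior_unique[OF assms(1) _ assms(2) _ assms(3)] by blast
  qed (use assms in blast)
  with assms show ?thesis by (auto simp: chi_def)
qed

lemma chi_outside_interiors:
  "\<not> (\<exists>t \<in> tri. x \<in> interior (triangle eps t)) \<Longrightarrow> chi eps u x = 0"
  by (simp add: chi_def)

lemma chi_measurable:
  assumes "eps > 0"
  shows "chi eps u \<in> borel_measurable borel"
proof -
  let ?U = "\<Union>t \<in> tri. interior (triangle eps t)"
  have "?U \<in> sets borel" by (auto intro: borel_open)
  moreover have "continuous_on ?U (chi eps u)"
  proof (rule continuous_on_open_UN)
    fix t assume "t \<in> tri"
    then show "continuous_on (interior (triangle eps t)) (chi eps u)"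
      using chi_eq_chiT[OF assms] continuous_on_const continuous_on_cong by metis
  qed simp
  ultimately have "(\<lambda>x. indicator ?U x *\<^sub>R chi eps u x) \<in> borel_measurable borel"
    by (rule borel_measurable_continuous_on_indicator)
  moreover have "(\<lambda>x. indicator ?U x *\<^sub>R chi eps u x) = chi eps u"
    using chi_outside_interiors by (force simp: indicator_def)
  ultimately show ?thesis by simp
qed

lemma triangle_vertices_mem:
  "eps *\<^sub>R i \<in> triangle eps (i, j, k)" "eps *\<^sub>R j \<in> triangle eps (i, j, k)"
  "eps *\<^sub>R k \<in> triangle eps (i, j, k)"
  by (simp_all add: triangle_def hull_inc)

lemma finite_triA:
  assumes "eps > 0" "bounded A"
  shows "finite (triA eps A)"
proof -
  obtain R where R: "\<And>x. x \<in> A \<Longrightarrow> norm x \<le> R"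
    using assms(2) unfolding bounded_pos by blast
  let ?F = "Lat \<inter> cball 0 (R / eps)"
  have vertex: "norm v \<le> R / eps" if "eps *\<^sub>R v \<in> A" for v
  proof -
    have "eps * norm v \<le> R"
      using R[OF that] assms(1) by simp
    with assms(1) show ?thesis
      by (simp add: field_simps)
  qed
  have "triA eps A \<subseteq> ?F \<times> ?F \<times> ?F"
  proof
    fix t assume t: "t \<in> triA eps A"
    obtain i j k where ijk: "t = (i, j, k)" by (cases t)
    with t have tri: "(i, j, k) \<in> tri" and "triangle eps (i, j, k) \<subseteq> A"
      by (auto simp: triA_def)
    then have "eps *\<^sub>R i \<in> A" "eps *\<^sub>R j \<in> A" "eps *\<^sub>R k \<in> A"
      using triangle_vertices_mem by blast+
    then show "t \<in> ?F \<times> ?F \<times> ?F"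
      using tri_vertices_in_Lat[OF tri] vertex ijk by simp
  qed
  then show ?thesis
    by (rule finite_subset) (simp add: finite_Lat_cball)
qed

lemma triA_mono: "A \<subseteq> B \<Longrightarrow> triA eps A \<subseteq> triA eps B"
  by (auto simp: triA_def)

lemma FT_nonneg: "eps \<ge> 0 \<Longrightarrow> FT eps u t \<ge> 0"
  by (cases t) (simp add: FT_def)

lemma FA_nonneg: "eps \<ge> 0 \<Longrightarrow> FA eps u A \<ge> 0"
  unfolding FA_def by (intro sum_nonneg FT_nonneg)

section \<open>Translations by the sublattice \<open>Lat1\<close>\<close>

definition tri_translate :: "pt \<Rightarrow> pt \<times> pt \<times> pt \<Rightarrow> pt \<times> pt \<times> pt" where
  "tri_translate s t = (case t of (i, j, k) \<Rightarrow> (i + s, j + s, k + s))"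

lemma tri_translate_simp [simp]: "tri_translate s (i, j, k) = (i + s, j + s, k + s)"
  by (simp add: tri_translate_def)

lemma tri_translate_inverse: "tri_translate (- s) (tri_translate s t) = t"
  by (cases t) simp

lemma inj_tri_translate: "inj (tri_translate s)"
  by (metis injI tri_translate_inverse)

lemma tri_translate_mem:
  assumes "s \<in> Lat1" "t \<in> tri"
  shows "tri_translate s t \<in> tri"
proof -
  have Lat1: "a + s \<in> Lat1" if "a \<in> Lat1" for a
    using Lat1_add_diff(1) that assms(1) by blast
  then have "a + s \<in> Lat2" if "a \<in> Lat2" for a
    using that by (force simp: Lat2_def add.commute add.left_commute)
  moreover have "a + s \<in> Lat3" if "a \<in> Lat3" for a
    using that Lat1 by (force simp: Lat3_def add.commute add.left_commute)
  ultimately show ?thesis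
    using assms(2) Lat1 by (cases t) (auto simp: tri_def dist_add_cancel2)
qed

lemma triangle_translate:
  "triangle eps (tri_translate s t) = (\<lambda>x. eps *\<^sub>R s + x) ` triangle eps t"
proof -
  obtain i j k where t: "t = (i, j, k)" by (cases t)
  have vertices: "{eps *\<^sub>R (i + s), eps *\<^sub>R (j + s), eps *\<^sub>R (k + s)}
      = (\<lambda>x. eps *\<^sub>R s + x) ` {eps *\<^sub>R i, eps *\<^sub>R j, eps *\<^sub>R k}"
    by (auto simp: scaleR_add_right add.commute)
  show ?thesis
    unfolding t triangle_def tri_translate_simp prod.case vertices by (rule convex_hull_translation)
qed

lemma chi_translate:
  assumes "eps > 0" "s \<in> Lat1"
  shows "chi eps (\<lambda>z. u (z + eps *\<^sub>R s)) x = chi eps u (x + eps *\<^sub>R s)"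
proof -
  have interior_translate:
    "x \<in> interior (triangle eps t) \<longleftrightarrow> x + eps *\<^sub>R s \<in> interior (triangle eps (tri_translate s t))" for t
    unfolding triangle_translate interior_translation by (force simp: add.commute)
  show ?thesis
  proof (cases "\<exists>t \<in> tri. x \<in> interior (triangle eps t)")
    case True
    then obtain t where t: "t \<in> tri" "x \<in> interior (triangle eps t)" by blast
    then have "chi eps u (x + eps *\<^sub>R s) = chiT eps u (tri_translate s t)"
      using chi_eq_chiT[OF assms(1) tri_translate_mem[OF assms(2)]] interior_translate by blast
    moreover have "chiT eps u (tri_translate s t) = chiT eps (\<lambda>z. u (z + eps *\<^sub>R s)) t"
      by (cases t) (simp add: chiT_def scaleR_add_right)
    ultimately show ?thesis
      using chi_eq_chiT[OF assms(1) t] by simp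
  next
    case False
    have "\<not> (\<exists>t \<in> tri. x + eps *\<^sub>R s \<in> interior (triangle eps t))"
    proof
      assume "\<exists>t \<in> tri. x + eps *\<^sub>R s \<in> interior (triangle eps t)"
      then obtain t where "t \<in> tri" "x + eps *\<^sub>R s \<in> interior (triangle eps t)" by blast
      then show False
        using False interior_translate[of "tri_translate (- s) t"] tri_translate_mem[OF Lat1_uminus[OF assms(2)]]
        by (metis add.right_inverse tri_translate_inverse)
    qed
    with False show ?thesis by (simp add: chi_def)
  qed
qed

lemma FA_translate_le:
  assumes "eps > 0" "s \<in> Lat1" "(\<lambda>x. eps *\<^sub>R s + x) ` A \<subseteq> B" "bounded B"
  shows "FA eps (\<lambda>z. u (z + eps *\<^sub>R s)) A \<le> FA eps u B"
proof -
  have "tri_translate s ` triA eps A \<subseteq> triA eps B"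
  proof
    fix t' assume "t' \<in> tri_translate s ` triA eps A"
    then obtain t where t: "t \<in> tri" "triangle eps t \<subseteq> A" "t' = tri_translate s t"
      by (auto simp: triA_def)
    then have "triangle eps t' \<subseteq> B"
      using t(2) assms(3) unfolding t(3) triangle_translate by blast
    then show "t' \<in> triA eps B"
      using tri_translate_mem[OF assms(2) t(1)] t(3) by (simp add: triA_def)
  qed
  moreover have "FT eps (\<lambda>z. u (z + eps *\<^sub>R s)) t = FT eps u (tri_translate s t)" for t
    by (cases t) (simp add: FT_def scaleR_add_right)
  ultimately have "FA eps (\<lambda>z. u (z + eps *\<^sub>R s)) A = (\<Sum>t \<in> tri_translate s ` triA eps A. FT eps u t)"
    unfolding FA_def by (simp add: sum.reindex inj_on_subset[OF inj_tri_translate])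
  also have "\<dots> \<le> FA eps u B"
    unfolding FA_def using finite_triA[OF assms(1,4)] FT_nonneg assms(1)
      \<open>tri_translate s ` triA eps A \<subseteq> triA eps B\<close>
    by (intro sum_mono2) auto
  finally show ?thesis .
qed

section \<open>Dilations and rectangles\<close>

lemma triangle_scale: "triangle (c * eps) t = (\<lambda>x. c *\<^sub>R x) ` triangle eps t"
proof -
  obtain i j k where t: "t = (i, j, k)" by (cases t)
  have vertices: "{(c * eps) *\<^sub>R i, (c * eps) *\<^sub>R j, (c * eps) *\<^sub>R k}
      = (\<lambda>x. c *\<^sub>R x) ` {eps *\<^sub>R i, eps *\<^sub>R j, eps *\<^sub>R k}"
    by auto
  show ?thesis
    unfolding t triangle_def prod.case vertices by (rule convex_hull_scaling)
qed

lemma interior_triangle_scale: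
  assumes "c \<noteq> 0"
  shows "interior (triangle (c * eps) t) = (\<lambda>x. c *\<^sub>R x) ` interior (triangle eps t)"
  unfolding triangle_scale
  using assms by (intro interior_injective_linear_image) (auto simp: linear_scaleR inj_on_def)

lemma chi_scale:
  assumes "c \<noteq> 0"
  shows "chi (c * eps) (\<lambda>y. u ((1 / c) *\<^sub>R y)) x = chi eps u ((1 / c) *\<^sub>R x)"
proof -
  have "x \<in> interior (triangle (c * eps) t) \<longleftrightarrow> (1 / c) *\<^sub>R x \<in> interior (triangle eps t)" for t
    using assms by (simp add: interior_triangle_scale mem_scaleR_image_iff)
  moreover have "chiT (c * eps) (\<lambda>y. u ((1 / c) *\<^sub>R y)) t = chiT eps u t" for t
    using assms by (cases t) (simp add: chiT_def)
  ultimately show ?thesis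
    by (simp add: chi_def)
qed

lemma FA_scale:
  assumes "c > 0"
  shows "FA (c * eps) (\<lambda>y. u ((1 / c) *\<^sub>R y)) ((\<lambda>x. c *\<^sub>R x) ` A) = c * FA eps u A"
proof -
  have "inj (\<lambda>x::pt. c *\<^sub>R x)"
    using assms by (auto intro: injI)
  then have "triA (c * eps) ((\<lambda>x. c *\<^sub>R x) ` A) = triA eps A"
    by (simp add: triA_def triangle_scale inj_image_subset_iff)
  moreover have "FT (c * eps) (\<lambda>y. u ((1 / c) *\<^sub>R y)) t = c * FT eps u t" for t
    using assms by (cases t) (simp add: FT_def)
  ultimately show ?thesis
    by (simp add: FA_def sum_distrib_left)
qed

lemma perp_inner [simp]: "\<nu> \<bullet> perp \<nu> = 0" "perp \<nu> \<bullet> \<nu> = 0" "perp \<nu> \<bullet> perp \<nu> = \<nu> \<bullet> \<nu>"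
  by (cases \<nu>; simp add: perp_def)+

lemma norm_perp [simp]: "norm (perp \<nu>) = norm \<nu>"
  by (simp add: norm_eq_sqrt_inner)

lemma unit_vector_decomposition:
  assumes "norm \<nu> = 1"
  shows "x = (x \<bullet> \<nu>) *\<^sub>R \<nu> + (x \<bullet> perp \<nu>) *\<^sub>R perp \<nu>"
proof -
  obtain a b c d where x: "x = (a, b)" and \<nu>: "\<nu> = (c, d)" by (cases x, cases \<nu>)
  have "c\<^sup>2 + d\<^sup>2 = 1"
    using assms by (simp add: \<nu> norm_Pair)
  then have "a = (a * c + b * d) * c + (b * c - a * d) * - d"
    "b = (a * c + b * d) * d + (b * c - a * d) * c"
    by (simp_all add: power2_eq_square algebra_simps flip: distrib_left)
  then show ?thesis
    by (simp add: x \<nu> perp_def)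
qed

lemma bounded_rect:
  assumes "norm \<nu> = 1"
  shows "bounded (rect \<nu> l h)"
proof -
  have "norm x \<le> h / 2 + l / 2" if "x \<in> rect \<nu> l h" for x
  proof -
    have "norm x \<le> \<bar>x \<bullet> \<nu>\<bar> * norm \<nu> + \<bar>x \<bullet> perp \<nu>\<bar> * norm (perp \<nu>)"
      using norm_triangle_ineq[of "(x \<bullet> \<nu>) *\<^sub>R \<nu>" "(x \<bullet> perp \<nu>) *\<^sub>R perp \<nu>"]
      by (simp flip: unit_vector_decomposition[OF assms])
    with that assms show ?thesis
      by (simp add: rect_def)
  qed
  then show ?thesis
    unfolding bounded_iff by blast
qed

lemma open_rect: "open (rect \<nu> l h)"
  unfolding rect_def by (intro open_Collect_conj open_Collect_less continuous_intros)

lemma rect_scale: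
  assumes "c > 0"
  shows "(\<lambda>x. c *\<^sub>R x) ` rect \<nu> l h = rect \<nu> (c * l) (c * h)"
proof -
  have "\<bar>a / c\<bar> < r / 2 \<longleftrightarrow> \<bar>a\<bar> < c * r / 2" for a r
    using assms by (simp add: abs_divide field_simps)
  with assms show ?thesis
    by (intro set_eqI) (simp add: mem_scaleR_image_iff rect_def)
qed

lemma rect_mono: "l \<le> l' \<Longrightarrow> h \<le> h' \<Longrightarrow> rect \<nu> l h \<subseteq> rect \<nu> l' h'"
  by (auto simp: rect_def)

lemma translate_rect_subset:
  assumes "norm \<nu> = 1" "norm a \<le> \<eta>"
  shows "(\<lambda>x. a + x) ` rect \<nu> l h \<subseteq> rect \<nu> (l + 2 * \<eta>) (h + 2 * \<eta>)"
proof (rule image_subsetI)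
  fix x assume "x \<in> rect \<nu> l h"
  then have x: "\<bar>x \<bullet> perp \<nu>\<bar> < l / 2" "\<bar>x \<bullet> \<nu>\<bar> < h / 2"
    by (simp_all add: rect_def)
  have "\<bar>a \<bullet> v\<bar> \<le> \<eta>" if "norm v = 1" for v
    using Cauchy_Schwarz_ineq2[of a v] that assms(2) by simp
  then have a: "\<bar>a \<bullet> perp \<nu>\<bar> \<le> \<eta>" "\<bar>a \<bullet> \<nu>\<bar> \<le> \<eta>"
    using assms(1) by simp_all
  have "\<bar>a \<bullet> perp \<nu> + x \<bullet> perp \<nu>\<bar> < (l + 2 * \<eta>) / 2"
    using abs_triangle_ineq[of "a \<bullet> perp \<nu>" "x \<bullet> perp \<nu>"] a(1) x(1) by argo
  moreover have "\<bar>a \<bullet> \<nu> + x \<bullet> \<nu>\<bar> < (h + 2 * \<eta>) / 2"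
    using abs_triangle_ineq[of "a \<bullet> \<nu>" "x \<bullet> \<nu>"] a(2) x(2) by argo
  ultimately show "a + x \<in> rect \<nu> (l + 2 * \<eta>) (h + 2 * \<eta>)"
    by (simp add: rect_def inner_add_left)
qed

section \<open>Chirality error and admissible sequences\<close>

lemma chi_nu_measurable: "chi_nu \<nu> \<in> borel_measurable borel"
  unfolding chi_nu_def by measurable

lemma chi_nu_scale: "c > 0 \<Longrightarrow> chi_nu \<nu> ((1 / c) *\<^sub>R x) = chi_nu \<nu> x"
  by (simp add: chi_nu_def zero_le_divide_iff)

lemma chi_nu_translate:
  "\<bar>chi_nu \<nu> (x + a) - chi_nu \<nu> x\<bar> \<le> 2 * indicator {x. \<bar>x \<bullet> \<nu>\<bar> \<le> \<bar>a \<bullet> \<nu>\<bar>} x"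
  by (auto simp: chi_nu_def indicator_def inner_add_left)

definition chi_error :: "real \<Rightarrow> (pt \<Rightarrow> pt) \<Rightarrow> pt \<Rightarrow> pt set \<Rightarrow> ennreal" where
  "chi_error eps u \<nu> A = (\<integral>\<^sup>+ x. ennreal (indicator A x * \<bar>chi eps u x - chi_nu \<nu> x\<bar>) \<partial>lborel)"

lemma chi_error_integrand_measurable:
  assumes "eps > 0" "A \<in> sets borel"
  shows "(\<lambda>x. ennreal (indicator A x * \<bar>chi eps u x - chi_nu \<nu> x\<bar>)) \<in> borel_measurable borel"
  using chi_measurable[OF assms(1)] chi_nu_measurable assms(2) by measurable

lemma chi_error_scale:
  assumes "c > 0" "eps > 0" "A \<in> sets borel"
  shows "chi_error (c * eps) (\<lambda>y. u ((1 / c) *\<^sub>R y)) \<nu> ((\<lambda>x. c *\<^sub>R x) ` A)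
    = ennreal (c\<^sup>2) * chi_error eps u \<nu> A"
proof -
  have "indicator ((\<lambda>x. c *\<^sub>R x) ` A) x * \<bar>chi (c * eps) (\<lambda>y. u ((1 / c) *\<^sub>R y)) x - chi_nu \<nu> x\<bar>
      = indicator A ((1 / c) *\<^sub>R x) * \<bar>chi eps u ((1 / c) *\<^sub>R x) - chi_nu \<nu> ((1 / c) *\<^sub>R x)\<bar>" for x
    using assms(1) by (simp add: chi_scale chi_nu_scale indicator_def mem_scaleR_image_iff)
  then show ?thesis
    unfolding chi_error_def
    using nn_integral_lborel_scale[OF chi_error_integrand_measurable[OF assms(2,3)] assms(1)]
    by (simp add: power2_eq_square)
qed

text \<open>A translation by \<open>a\<close> moves the interface of \<open>chi_nu \<nu>\<close>; only the points of the slab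
  \<open>\<bar>x \<bullet> \<nu>\<bar> \<le> \<bar>a \<bullet> \<nu>\<bar>\<close> change sides.\<close>
lemma chi_error_translate_le:
  assumes "eps > 0" "s \<in> Lat1" "(\<lambda>x. eps *\<^sub>R s + x) ` A \<subseteq> B" "A \<in> sets borel" "B \<in> sets borel"
  shows "chi_error eps (\<lambda>z. u (z + eps *\<^sub>R s)) \<nu> A
    \<le> chi_error eps u \<nu> B + 2 * emeasure lborel (A \<inter> {x. \<bar>x \<bullet> \<nu>\<bar> \<le> \<bar>(eps *\<^sub>R s) \<bullet> \<nu>\<bar>})"
proof -
  let ?a = "eps *\<^sub>R s"
  let ?S = "A \<inter> {x. \<bar>x \<bullet> \<nu>\<bar> \<le> \<bar>?a \<bullet> \<nu>\<bar>}"
  let ?g = "\<lambda>x. ennreal (indicator B x * \<bar>chi eps u x - chi_nu \<nu> x\<bar>)"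
  have g [measurable]: "?g \<in> borel_measurable borel"
    by (rule chi_error_integrand_measurable[OF assms(1,5)])
  have S [measurable]: "?S \<in> sets borel"
    using assms(4) by measurable
  have pointwise: "ennreal (indicator A x * \<bar>chi eps (\<lambda>z. u (z + ?a)) x - chi_nu \<nu> x\<bar>)
      \<le> ?g (x + ?a) + ennreal (2 * indicator ?S x)" for x
  proof -
    have "indicator A x * \<bar>chi eps (\<lambda>z. u (z + ?a)) x - chi_nu \<nu> x\<bar>
        \<le> indicator B (x + ?a) * \<bar>chi eps u (x + ?a) - chi_nu \<nu> (x + ?a)\<bar> + 2 * indicator ?S x"
    proof (cases "x \<in> A")
      case True
      then have "x + ?a \<in> B" using assms(3) by (auto simp: add.commute)
      with True show ?thesis
        using chi_nu_translate[of \<nu> x ?a]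
        by (auto simp: chi_translate[OF assms(1,2)] indicator_def)
    qed simp
    then show ?thesis
      by (simp add: ennreal_leI flip: ennreal_plus)
  qed
  have "chi_error eps (\<lambda>z. u (z + ?a)) \<nu> A \<le> (\<integral>\<^sup>+ x. ?g (x + ?a) + ennreal (2 * indicator ?S x) \<partial>lborel)"
    unfolding chi_error_def by (rule nn_integral_mono) (rule pointwise)
  also have "\<dots> = (\<integral>\<^sup>+ x. ?g (x + ?a) \<partial>lborel) + (\<integral>\<^sup>+ x. ennreal (2 * indicator ?S x) \<partial>lborel)"
    by (intro nn_integral_add) measurable
  also have "(\<integral>\<^sup>+ x. ennreal (2 * indicator ?S x) \<partial>lborel) = 2 * emeasure lborel ?S"
    using S by (simp add: ennreal_mult ennreal_indicator nn_integral_cmult_indicator)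
  also have "(\<integral>\<^sup>+ x. ?g (x + ?a) \<partial>lborel) = chi_error eps u \<nu> B"
    unfolding chi_error_def by (rule nn_integral_lborel_translate[OF g])
  finally show ?thesis .
qed

text \<open>The competitors in the definition of \<open>psi\<close>, with an arbitrary region \<open>A\<close> in place
  of the rectangle.\<close>
definition admissible :: "pt \<Rightarrow> pt set \<Rightarrow> (nat \<Rightarrow> real) \<Rightarrow> (nat \<Rightarrow> pt \<Rightarrow> pt) \<Rightarrow> bool" where
  "admissible \<nu> A eps u \<longleftrightarrow> (\<forall>n. eps n > 0) \<and> eps \<longlonglongrightarrow> 0 \<and> (\<forall>n. spin_field (eps n) (u n)) \<and>
     (\<lambda>n. chi_error (eps n) (u n) \<nu> A) \<longlonglongrightarrow> 0"

definition limit_energies :: "pt \<Rightarrow> pt set \<Rightarrow> ereal set" where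
  "limit_energies \<nu> A =
     {liminf (\<lambda>n. ereal (FA (eps n) (u n) A)) | eps u. admissible \<nu> A eps u}"

lemma limit_energiesI:
  "admissible \<nu> A eps u \<Longrightarrow> liminf (\<lambda>n. ereal (FA (eps n) (u n) A)) \<in> limit_energies \<nu> A"
  unfolding limit_energies_def by blast

lemma psi_eq_Inf_limit_energies: "psi l h \<nu> = ereal (1 / l) * Inf (limit_energies \<nu> (rect \<nu> l h))"
  unfolding psi_def limit_energies_def admissible_def chi_error_def ..

lemma Inf_limit_energies_nonneg: "0 \<le> Inf (limit_energies \<nu> A)"
proof (rule Inf_greatest)
  fix s assume "s \<in> limit_energies \<nu> A"
  then obtain eps u where "s = liminf (\<lambda>n. ereal (FA (eps n) (u n) A))" "\<forall>n. eps n > 0"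
    by (auto simp: limit_energies_def admissible_def)
  then show "0 \<le> s"
    by (simp add: Liminf_bounded FA_nonneg less_imp_le)
qed

lemma admissible_scale:
  assumes "c > 0" "A \<in> sets borel" "admissible \<nu> A eps u"
  shows "admissible \<nu> ((\<lambda>x. c *\<^sub>R x) ` A) (\<lambda>n. c * eps n) (\<lambda>n y. u n ((1 / c) *\<^sub>R y))"
  unfolding admissible_def
proof (intro conjI allI)
  have eps: "\<forall>n. eps n > 0" "eps \<longlonglongrightarrow> 0" and "\<forall>n. spin_field (eps n) (u n)"
    and err: "(\<lambda>n. chi_error (eps n) (u n) \<nu> A) \<longlonglongrightarrow> 0"
    using assms(3) by (auto simp: admissible_def)
  show "c * eps n > 0" for n
    using assms(1) eps(1) by simp
  show "(\<lambda>n. c * eps n) \<longlonglongrightarrow> 0"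
    using tendsto_mult_right_zero[OF eps(2)] by simp
  show "spin_field (c * eps n) (\<lambda>y. u n ((1 / c) *\<^sub>R y))" for n
    using \<open>\<forall>n. spin_field (eps n) (u n)\<close> assms(1) by (simp add: spin_field_def)
  show "(\<lambda>n. chi_error (c * eps n) (\<lambda>y. u n ((1 / c) *\<^sub>R y)) \<nu> ((\<lambda>x. c *\<^sub>R x) ` A)) \<longlonglongrightarrow> 0"
    using ennreal_tendsto_cmult[OF _ err, of "ennreal (c\<^sup>2)"]
    by (simp add: chi_error_scale[OF assms(1) eps(1)[rule_format] assms(2)])
qed

lemma limit_energies_scale:
  assumes "c > 0" "A \<in> sets borel" "s \<in> limit_energies \<nu> A"
  shows "ereal c * s \<in> limit_energies \<nu> ((\<lambda>x. c *\<^sub>R x) ` A)"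
proof -
  obtain eps u where adm: "admissible \<nu> A eps u" and s: "s = liminf (\<lambda>n. ereal (FA (eps n) (u n) A))"
    using assms(3) by (auto simp: limit_energies_def)
  have "ereal c * s = liminf (\<lambda>n. ereal (FA (c * eps n) (\<lambda>y. u n ((1 / c) *\<^sub>R y)) ((\<lambda>x. c *\<^sub>R x) ` A)))"
    using Liminf_ereal_mult_left[of sequentially c "\<lambda>n. ereal (FA (eps n) (u n) A)"] assms(1)
    by (simp add: s FA_scale)
  with limit_energiesI[OF admissible_scale[OF assms(1,2) adm]] show ?thesis
    by simp
qed

lemma admissible_translate:
  assumes adm: "admissible \<nu> B eps u" and S: "\<And>m. S m \<in> Lat1"
    and sub: "\<forall>\<^sub>F m in sequentially. (\<lambda>x. eps m *\<^sub>R S m + x) ` A \<subseteq> B"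
    and normal: "(\<lambda>m. (eps m *\<^sub>R S m) \<bullet> \<nu>) \<longlonglongrightarrow> 0"
    and "\<nu> \<noteq> 0" "bounded A" "A \<in> sets borel" "B \<in> sets borel"
  shows "admissible \<nu> A eps (\<lambda>m z. u m (z + eps m *\<^sub>R S m))"
  unfolding admissible_def
proof (intro conjI allI)
  have eps: "\<forall>n. eps n > 0" "eps \<longlonglongrightarrow> 0" and spin: "\<forall>n. spin_field (eps n) (u n)"
    and err: "(\<lambda>n. chi_error (eps n) (u n) \<nu> B) \<longlonglongrightarrow> 0"
    using adm by (auto simp: admissible_def)
  show "eps m > 0" for m
    using eps(1) by simp
  show "eps \<longlonglongrightarrow> 0"
    by (fact eps(2))
  show "spin_field (eps m) (\<lambda>z. u m (z + eps m *\<^sub>R S m))" for m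
    unfolding spin_field_def
  proof
    fix x assume "x \<in> Lat"
    then have "x + S m \<in> Lat"
      using Lat_add Lat1_subset_Lat S by blast
    then have "norm (u m (eps m *\<^sub>R (x + S m))) = 1"
      using spin by (simp add: spin_field_def del: scaleR_add_right)
    then show "norm (u m (eps m *\<^sub>R x + eps m *\<^sub>R S m)) = 1"
      by (simp add: scaleR_add_right)
  qed
  let ?slab = "\<lambda>m. emeasure lborel (A \<inter> {x. \<bar>x \<bullet> \<nu>\<bar> \<le> \<bar>(eps m *\<^sub>R S m) \<bullet> \<nu>\<bar>})"
  have "(\<lambda>m. chi_error (eps m) (u m) \<nu> B + 2 * ?slab m) \<longlonglongrightarrow> 0 + 2 * 0"
    using emeasure_slab_tendsto_0[OF assms(5-7) normal]
    by (intro tendsto_add err ennreal_tendsto_cmult) simp_all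
  then have bound: "(\<lambda>m. chi_error (eps m) (u m) \<nu> B + 2 * ?slab m) \<longlonglongrightarrow> 0"
    by simp
  have le: "\<forall>\<^sub>F m in sequentially.
      chi_error (eps m) (\<lambda>z. u m (z + eps m *\<^sub>R S m)) \<nu> A \<le> chi_error (eps m) (u m) \<nu> B + 2 * ?slab m"
    using sub by eventually_elim (rule chi_error_translate_le[OF eps(1)[rule_format] S _ assms(7,8)])
  show "(\<lambda>m. chi_error (eps m) (\<lambda>z. u m (z + eps m *\<^sub>R S m)) \<nu> A) \<longlonglongrightarrow> 0"
    by (rule tendsto_sandwich[OF _ le tendsto_const bound]) simp
qed

section \<open>Cheap columns of a long rectangle\<close>

text \<open>The \<open>k\<close>-th of \<open>n\<close> translates of \<open>rect \<nu> w H\<close> placed side by side along \<open>perp \<nu>\<close>,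
  filling \<open>rect \<nu> (n * w) H\<close>.\<close>
definition column_center :: "pt \<Rightarrow> nat \<Rightarrow> real \<Rightarrow> nat \<Rightarrow> pt" where
  "column_center \<nu> n w k = ((real k + 1 / 2 - real n / 2) * w) *\<^sub>R perp \<nu>"

definition rect_column :: "pt \<Rightarrow> nat \<Rightarrow> real \<Rightarrow> real \<Rightarrow> nat \<Rightarrow> pt set" where
  "rect_column \<nu> n w H k = (\<lambda>x. column_center \<nu> n w k + x) ` rect \<nu> w H"

lemma rect_column_bounds:
  assumes "norm \<nu> = 1" "y \<in> rect_column \<nu> n w H k"
  shows "real k * w < y \<bullet> perp \<nu> + real n * w / 2" "y \<bullet> perp \<nu> + real n * w / 2 < (real k + 1) * w"
    "\<bar>y \<bullet> \<nu>\<bar> < H / 2"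
proof -
  obtain x where x: "x \<in> rect \<nu> w H" "y = column_center \<nu> n w k + x"
    using assms(2) by (auto simp: rect_column_def)
  have "perp \<nu> \<bullet> perp \<nu> = 1"
    using assms(1) by (simp add: power2_norm_eq_inner[symmetric])
  then have "y \<bullet> perp \<nu> = (real k + 1 / 2 - real n / 2) * w + x \<bullet> perp \<nu>" "y \<bullet> \<nu> = x \<bullet> \<nu>"
    by (simp_all add: x(2) column_center_def inner_add_left)
  with x(1) show "real k * w < y \<bullet> perp \<nu> + real n * w / 2" "y \<bullet> perp \<nu> + real n * w / 2 < (real k + 1) * w"
    "\<bar>y \<bullet> \<nu>\<bar> < H / 2"
    by (auto simp: rect_def abs_less_iff algebra_simps)
qed

lemma rect_column_subset:
  assumes "norm \<nu> = 1" "k < n" "w > 0"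
  shows "rect_column \<nu> n w H k \<subseteq> rect \<nu> (real n * w) H"
proof
  fix y assume y: "y \<in> rect_column \<nu> n w H k"
  have "(real k + 1) * w \<le> real n * w" "0 \<le> real k * w"
    using assms(2,3) by (auto intro: mult_right_mono)
  with rect_column_bounds[OF assms(1) y] have "\<bar>y \<bullet> perp \<nu>\<bar> < real n * w / 2"
    unfolding abs_less_iff by linarith
  with rect_column_bounds(3)[OF assms(1) y] show "y \<in> rect \<nu> (real n * w) H"
    by (simp add: rect_def)
qed

lemma rect_columns_disjoint:
  assumes "norm \<nu> = 1" "w > 0"
  shows "disjoint_family_on (rect_column \<nu> n w H) K"
  unfolding disjoint_family_on_def
proof (intro ballI impI, rule ccontr)
  fix k k' assume "k \<noteq> k'" "rect_column \<nu> n w H k \<inter> rect_column \<nu> n w H k' \<noteq> {}"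
  then obtain y where y: "y \<in> rect_column \<nu> n w H k" "y \<in> rect_column \<nu> n w H k'" "k \<noteq> k'"
    by blast
  then consider "real k + 1 \<le> real k'" | "real k' + 1 \<le> real k"
    by linarith
  then show False
  proof cases
    case 1
    then have "(real k + 1) * w \<le> real k' * w" using assms(2) by (intro mult_right_mono) auto
    then show False using rect_column_bounds[OF assms(1) y(1)] rect_column_bounds[OF assms(1) y(2)] by linarith
  next
    case 2
    then have "(real k' + 1) * w \<le> real k * w" using assms(2) by (intro mult_right_mono) auto
    then show False using rect_column_bounds[OF assms(1) y(1)] rect_column_bounds[OF assms(1) y(2)] by linarith
  qed
qed

lemma sum_FA_disjoint_le:
  assumes "eps \<ge> 0" "finite K" "\<And>k. k \<in> K \<Longrightarrow> P k \<subseteq> B" "disjoint_family_on P K" "finite (triA eps B)"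
  shows "(\<Sum>k \<in> K. FA eps u (P k)) \<le> FA eps u B"
proof -
  have sub: "triA eps (P k) \<subseteq> triA eps B" if "k \<in> K" for k
    using assms(3)[OF that] by (rule triA_mono)
  then have fin: "finite (triA eps (P k))" if "k \<in> K" for k
    using assms(5) finite_subset that by blast
  have "triA eps (P k) \<inter> triA eps (P k') = {}" if "k \<in> K" "k' \<in> K" "k \<noteq> k'" for k k'
  proof (rule ccontr)
    assume "triA eps (P k) \<inter> triA eps (P k') \<noteq> {}"
    then obtain i j l where "triangle eps (i, j, l) \<subseteq> P k" "triangle eps (i, j, l) \<subseteq> P k'"
      by (auto simp: triA_def)
    then have "eps *\<^sub>R i \<in> P k \<inter> P k'"
      using triangle_vertices_mem by blast
    with assms(4) that show False
      by (auto simp: disjoint_family_on_def)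
  qed
  then have "(\<Sum>k \<in> K. FA eps u (P k)) = (\<Sum>t \<in> (\<Union>k \<in> K. triA eps (P k)). FT eps u t)"
    unfolding FA_def using assms(2) fin by (intro sum.UNION_disjoint[symmetric]) auto
  also have "\<dots> \<le> FA eps u B"
    unfolding FA_def using assms(1,5) sub FT_nonneg by (intro sum_mono2) auto
  finally show ?thesis .
qed

lemma exists_le_average:
  fixes f :: "'a \<Rightarrow> real"
  assumes "finite K" "K \<noteq> {}"
  shows "\<exists>k \<in> K. real (card K) * f k \<le> sum f K"
proof -
  have "Min (f ` K) \<in> f ` K"
    using assms by simp
  then obtain k where "k \<in> K" "f k = Min (f ` K)"
    by (metis imageE)
  with assms(1) have "real (card K) * f k \<le> sum f K"
    by (intro sum_bounded_below[of K "f k" f, simplified]) auto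
  with \<open>k \<in> K\<close> show ?thesis by blast
qed

lemma cheapest_column:
  assumes "norm \<nu> = 1" "n \<ge> 1" "w > 0" "eps > 0"
  shows "\<exists>k < n. real n * FA eps u (rect_column \<nu> n w H k) \<le> FA eps u (rect \<nu> (real n * w) H)"
proof -
  have "{..<n} \<noteq> {}"
    using assms(2) by (simp add: lessThan_empty_iff)
  then obtain k where "k < n" and k: "real n * FA eps u (rect_column \<nu> n w H k)
      \<le> (\<Sum>k < n. FA eps u (rect_column \<nu> n w H k))"
    using exists_le_average[of "{..<n}" "\<lambda>k. FA eps u (rect_column \<nu> n w H k)"] by auto
  moreover have "(\<Sum>k < n. FA eps u (rect_column \<nu> n w H k)) \<le> FA eps u (rect \<nu> (real n * w) H)"
    using assms rect_column_subset rect_columns_disjoint finite_triA bounded_rect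
    by (intro sum_FA_disjoint_le) auto
  ultimately show ?thesis
    by (blast intro: order_trans)
qed

lemma translate_rect_subset_column:
  assumes "norm \<nu> = 1" "norm (a - column_center \<nu> n (l + 2 * \<eta>) k) \<le> \<eta>" "h + 2 * \<eta> \<le> H"
  shows "(\<lambda>x. a + x) ` rect \<nu> l h \<subseteq> rect_column \<nu> n (l + 2 * \<eta>) H k"
proof -
  let ?c = "column_center \<nu> n (l + 2 * \<eta>) k"
  have "(\<lambda>x. a + x) ` rect \<nu> l h = (\<lambda>x. ?c + x) ` (\<lambda>x. (a - ?c) + x) ` rect \<nu> l h"
    by (simp add: image_image add.assoc[symmetric])
  also have "\<dots> \<subseteq> (\<lambda>x. ?c + x) ` rect \<nu> (l + 2 * \<eta>) H"
    using translate_rect_subset[OF assms(1,2)] rect_mono[OF order_refl assms(3)] by (intro image_mono) blast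
  finally show ?thesis
    unfolding rect_column_def .
qed

lemma column_center_inner [simp]: "column_center \<nu> n w k \<bullet> \<nu> = 0"
  by (simp add: column_center_def)

lemma inner_tendsto_0_if_close_to_orthogonal:
  assumes "norm \<nu> = 1" "\<And>m. norm (a m - b m) \<le> r m" "\<And>m. b m \<bullet> \<nu> = 0" "r \<longlonglongrightarrow> 0"
  shows "(\<lambda>m. a m \<bullet> \<nu>) \<longlonglongrightarrow> 0"
proof (rule Lim_null_comparison)
  have "\<bar>a m \<bullet> \<nu>\<bar> \<le> r m" for m
  proof -
    have "\<bar>a m \<bullet> \<nu>\<bar> = \<bar>(a m - b m) \<bullet> \<nu>\<bar>"
      using assms(3) by (simp add: inner_diff_left)
    also have "\<dots> \<le> norm (a m - b m)"
      using Cauchy_Schwarz_ineq2[of _ \<nu>] assms(1) by simp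
    also have "\<dots> \<le> r m"
      by (rule assms(2))
    finally show ?thesis .
  qed
  then show "\<forall>\<^sub>F m in sequentially. norm (a m \<bullet> \<nu>) \<le> r m"
    by (intro always_eventually allI) (simp only: real_norm_def)
qed (rule assms(4))

lemma cheap_columns_near_Lat1:
  assumes "norm \<nu> = 1" "n \<ge> 1" "w > 0" "\<forall>m. eps m > 0"
  obtains K S where "\<And>m. K m < n" "\<And>m. S m \<in> Lat1"
    "\<And>m. real n * FA (eps m) (u m) (rect_column \<nu> n w H (K m)) \<le> FA (eps m) (u m) (rect \<nu> (real n * w) H)"
    "\<And>m. norm (eps m *\<^sub>R S m - column_center \<nu> n w (K m)) \<le> 4 * eps m"
proof -
  have "\<exists>k S. k < n \<and> S \<in> Lat1
      \<and> real n * FA (eps m) (u m) (rect_column \<nu> n w H k) \<le> FA (eps m) (u m) (rect \<nu> (real n * w) H)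
      \<and> norm (eps m *\<^sub>R S - column_center \<nu> n w k) \<le> 4 * eps m" for m
    using cheapest_column[OF assms(1-3) assms(4)[rule_format]] exists_scaled_Lat1_within_4[OF assms(4)[rule_format]]
    by blast
  with that show ?thesis
    by metis
qed

lemma admissible_translate_into_cheap_column:
  assumes \<nu>: "norm \<nu> = 1" and n: "n \<ge> 1" and "l > 0" "\<eta> > 0" and H: "h + 2 * \<eta> \<le> H"
    and adm: "admissible \<nu> (rect \<nu> (real n * (l + 2 * \<eta>)) H) eps u"
  obtains v where "admissible \<nu> (rect \<nu> l h) eps v"
    "\<forall>\<^sub>F m in sequentially.
       real n * FA (eps m) (v m) (rect \<nu> l h) \<le> FA (eps m) (u m) (rect \<nu> (real n * (l + 2 * \<eta>)) H)"
proof -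
  define w where "w = l + 2 * \<eta>"
  define B where "B = rect \<nu> (real n * w) H"
  define R where "R = rect \<nu> l h"
  have w: "w > 0"
    using assms by (simp add: w_def)
  have eps: "\<forall>m. eps m > 0" "eps \<longlonglongrightarrow> 0"
    using adm by (auto simp: admissible_def)
  obtain K S where K: "\<And>m. K m < n" and S: "\<And>m. S m \<in> Lat1"
    and cheap: "\<And>m. real n * FA (eps m) (u m) (rect_column \<nu> n w H (K m)) \<le> FA (eps m) (u m) B"
    and close: "\<And>m. norm (eps m *\<^sub>R S m - column_center \<nu> n w (K m)) \<le> 4 * eps m"
    using cheap_columns_near_Lat1[OF \<nu> n w eps(1), where u = u and H = H] unfolding B_def by blast
  define v where "v m z = u m (z + eps m *\<^sub>R S m)" for m z
  have column_B: "rect_column \<nu> n w H (K m) \<subseteq> B" for m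
    unfolding B_def by (rule rect_column_subset[OF \<nu> K w])
  have "\<forall>\<^sub>F m in sequentially. 4 * eps m < \<eta>"
    using order_tendstoD(2)[OF eps(2), of "\<eta> / 4"] assms(4) by (simp add: mult.commute)
  then have into_column: "\<forall>\<^sub>F m in sequentially. (\<lambda>x. eps m *\<^sub>R S m + x) ` R \<subseteq> rect_column \<nu> n w H (K m)"
  proof eventually_elim
    case (elim m)
    with close[of m] have "norm (eps m *\<^sub>R S m - column_center \<nu> n w (K m)) \<le> \<eta>"
      by simp
    then show ?case
      unfolding R_def w_def by (rule translate_rect_subset_column[OF \<nu> _ H])
  qed
  then have "\<forall>\<^sub>F m in sequentially. (\<lambda>x. eps m *\<^sub>R S m + x) ` R \<subseteq> B"
    by (rule eventually_mono) (rule subset_trans[OF _ column_B])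
  moreover have "(\<lambda>m. (eps m *\<^sub>R S m) \<bullet> \<nu>) \<longlonglongrightarrow> 0"
    using tendsto_mult_right_zero[OF eps(2), of 4]
    by (intro inner_tendsto_0_if_close_to_orthogonal[OF \<nu> close]) simp_all
  moreover have "\<nu> \<noteq> 0" "bounded R" "R \<in> sets borel" "B \<in> sets borel"
    using \<nu> by (auto simp: R_def B_def bounded_rect open_rect borel_open)
  ultimately have "admissible \<nu> R eps v"
    unfolding v_def by (intro admissible_translate[OF adm[folded w_def, folded B_def] S])
  moreover have "\<forall>\<^sub>F m in sequentially. real n * FA (eps m) (v m) R \<le> FA (eps m) (u m) B"
    using into_column
  proof eventually_elim
    case (elim m)
    have "FA (eps m) (v m) R \<le> FA (eps m) (u m) (rect_column \<nu> n w H (K m))"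
      unfolding v_def using bounded_subset[OF bounded_rect[OF \<nu>] column_B[unfolded B_def]]
      by (rule FA_translate_le[OF eps(1)[rule_format] S elim])
    with cheap[of m] show ?case
      by (meson mult_left_mono of_nat_0_le_iff order_trans)
  qed
  ultimately show ?thesis
    using that unfolding R_def B_def w_def by blast
qed

lemma limit_energies_glue:
  assumes "norm \<nu> = 1" "n \<ge> 1" "l > 0" "\<eta> > 0" "h + 2 * \<eta> \<le> H"
    and "s \<in> limit_energies \<nu> (rect \<nu> (real n * (l + 2 * \<eta>)) H)"
  shows "ereal (real n) * Inf (limit_energies \<nu> (rect \<nu> l h)) \<le> s"
proof -
  let ?B = "rect \<nu> (real n * (l + 2 * \<eta>)) H" and ?R = "rect \<nu> l h"
  obtain eps u where adm: "admissible \<nu> ?B eps u" and s: "s = liminf (\<lambda>m. ereal (FA (eps m) (u m) ?B))"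
    using assms(6) by (auto simp: limit_energies_def)
  obtain v where "admissible \<nu> ?R eps v"
    and energy: "\<forall>\<^sub>F m in sequentially. real n * FA (eps m) (v m) ?R \<le> FA (eps m) (u m) ?B"
    by (rule admissible_translate_into_cheap_column[OF assms(1-5) adm])
  then have "ereal (real n) * Inf (limit_energies \<nu> ?R) \<le> ereal (real n) * liminf (\<lambda>m. ereal (FA (eps m) (v m) ?R))"
    by (intro ereal_mult_left_mono Inf_lower limit_energiesI) simp_all
  also have "\<dots> = liminf (\<lambda>m. ereal (real n * FA (eps m) (v m) ?R))"
    using Liminf_ereal_mult_left[of sequentially "real n" "\<lambda>m. ereal (FA (eps m) (v m) ?R)"] by simp
  also have "\<dots> \<le> s"
    unfolding s using energy by (intro Liminf_mono) simp
  finally show ?thesis .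
qed

section \<open>Comparison of rectangles\<close>

lemma Inf_limit_energies_le:
  assumes \<nu>: "norm \<nu> = 1" and "l > 0" "l' > 0" "h' > 0" "\<eta> > 0"
  shows "Inf (limit_energies \<nu> (rect \<nu> l h))
    \<le> ereal ((l + 2 * \<eta>) / l') * Inf (limit_energies \<nu> (rect \<nu> l' h'))"
proof (rule ereal_le_mult_Inf)
  define w where "w = l + 2 * \<eta>"
  have w: "w > 0"
    using assms by (simp add: w_def)
  then show "(l + 2 * \<eta>) / l' > 0"
    using assms by (simp add: w_def)
  fix s assume s: "s \<in> limit_energies \<nu> (rect \<nu> l' h')"
  obtain n0 :: nat where "(h + 2 * \<eta>) * l' / (w * h') < real n0"
    using reals_Archimedean2 by blast
  define n where "n = Suc n0"
  define c where "c = real n * w / l'"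
  have c: "c > 0"
    using w assms by (simp add: c_def n_def)
  have "(h + 2 * \<eta>) * l' < real n0 * (w * h')"
    using \<open>(h + 2 * \<eta>) * l' / (w * h') < real n0\<close> w assms(4) by (simp add: pos_divide_less_eq)
  then have height: "h + 2 * \<eta> \<le> c * h'"
    using mult_pos_pos[OF w assms(4)] assms(3) by (simp add: c_def n_def field_simps)
  have "ereal c * s \<in> limit_energies \<nu> (rect \<nu> (real n * (l + 2 * \<eta>)) (c * h'))"
    using limit_energies_scale[OF c _ s] assms c
    by (simp add: rect_scale open_rect borel_open c_def w_def)
  from limit_energies_glue[OF \<nu> _ assms(2,5) height this]
  have "ereal (real n) * Inf (limit_energies \<nu> (rect \<nu> l h)) \<le> ereal c * s"
    by (simp add: n_def)
  then have "ereal (1 / real n) * (ereal (real n) * Inf (limit_energies \<nu> (rect \<nu> l h)))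
      \<le> ereal (1 / real n) * (ereal c * s)"
    by (rule ereal_mult_left_mono) simp
  then show "Inf (limit_energies \<nu> (rect \<nu> l h)) \<le> ereal ((l + 2 * \<eta>) / l') * s"
    by (simp add: mult.assoc[symmetric] c_def n_def w_def)
qed

lemma psi_le:
  assumes "norm \<nu> = 1" "l > 0" "l' > 0" "h' > 0"
  shows "psi l h \<nu> \<le> psi l' h' \<nu>"
proof (rule ereal_le_if_le_mult_gt_1)
  show "0 \<le> psi l' h' \<nu>"
    using assms(3) Inf_limit_energies_nonneg by (simp add: psi_eq_Inf_limit_energies)
  fix t :: real assume "1 < t"
  define \<eta> where "\<eta> = (t - 1) * l / 2"
  have "\<eta> > 0"
    using \<open>1 < t\<close> assms(2) by (simp add: \<eta>_def)
  let ?I' = "Inf (limit_energies \<nu> (rect \<nu> l' h'))"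
  have "psi l h \<nu> \<le> ereal (1 / l) * (ereal ((l + 2 * \<eta>) / l') * ?I')"
    unfolding psi_eq_Inf_limit_energies
    using Inf_limit_energies_le[OF assms \<open>\<eta> > 0\<close>] by (rule ereal_mult_left_mono) (use assms(2) in simp)
  also have "\<dots> = ereal (1 / l * ((l + 2 * \<eta>) / l')) * ?I'"
    by (simp only: mult.assoc[symmetric] times_ereal.simps(1))
  also have "1 / l * ((l + 2 * \<eta>) / l') = t * (1 / l')"
    using assms(2) by (simp add: \<eta>_def field_simps)
  also have "ereal (t * (1 / l')) * ?I' = ereal t * psi l' h' \<nu>"
    by (simp only: psi_eq_Inf_limit_energies mult.assoc[symmetric] times_ereal.simps(1))
  finally show "psi l h \<nu> \<le> ereal t * psi l' h' \<nu>" .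
qed

theorem lemma4p3:
  fixes \<nu> :: pt
  assumes "norm \<nu> = 1"
  shows "\<forall>l h l' h'. l > 0 \<and> h > 0 \<and> l' > 0 \<and> h' > 0 \<longrightarrow> psi l h \<nu> = psi l' h' \<nu>"
  using psi_le[OF assms] by (blast intro: antisym)

end
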